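(* Let $\Theta\subseteq\mathbb{R}^p$ be open, $U_\theta$ a differentiable family of $D\times D$ unitary matrices, and $\rho_0=|\psi_0\rangle\langle\psi_0|$ a pure state on $\mathbb{C}^D$. For the unitary channel $\rho\mapsto U_\theta\rho U_\theta^\dagger$ with canonical Kraus operators $\Upsilon_1=U_\theta$, $\Upsilon_k=0$ ($k\ge2$), one has $H_\theta=C_\Upsilon(\theta)$ if and only if $\mathrm{tr}\{U_\theta\rho_0(\frac{\partial U_\theta}{\partial\theta^l})^\dagger\}=0$ for all $l=1,\dots,p$.
   Context: $C_\Upsilon(\theta)$ is the $p\times p$ matrix with entries $4\sum_l\mathrm{Re}\,\mathrm{tr}\{\frac{\partial\Upsilon_l}{\partial\theta^j}\rho_0(\frac{\partial\Upsilon_l}{\partial\theta^k})^\dagger\}$. $H_\theta$ is the SLD quantum information matrix of $\rho_\theta=U_\theta\rho_0U_\theta^\dagger$, with entries $\mathrm{Re}\,\mathrm{tr}\{\lambda^j\rho_\theta\lambda^k\}$, where $\lambda^j$ is a Hermitian solution of $\frac{\partial\rho_\theta}{\partial\theta^j}=\frac12(\rho_\theta\lambda^j+\lambda^j\rho_\theta)$. *)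

theory Defs
  imports "HOL-Analysis.Analysis"
begin

definition adj :: "complex^'n^'n \<Rightarrow> complex^'n^'n" where
  "adj A = (\<chi> i j. cnj (A $ j $ i))"

definition unitary_mat :: "complex^'n^'n \<Rightarrow> bool" where
  "unitary_mat U \<longleftrightarrow> adj U ** U = mat 1 \<and> U ** adj U = mat 1"

definition hermitian_mat :: "complex^'n^'n \<Rightarrow> bool" where
  "hermitian_mat A \<longleftrightarrow> adj A = A"

definition pure_state :: "complex^'n^'n \<Rightarrow> bool" where
  "pure_state \<rho> \<longleftrightarrow> (\<exists>\<psi> :: complex^'n. norm \<psi> = 1 \<and> \<rho> = (\<chi> i j. \<psi> $ i * cnj (\<psi> $ j)))"

definition pdiff :: "(real^'p \<Rightarrow> 'b::real_normed_vector) \<Rightarrow> real^'p \<Rightarrow> 'p \<Rightarrow> 'b" where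
  "pdiff f \<theta> j = frechet_derivative f (at \<theta>) (axis j 1)"

definition rho_out :: "(real^'p \<Rightarrow> complex^'n^'n) \<Rightarrow> complex^'n^'n \<Rightarrow> real^'p \<Rightarrow> complex^'n^'n" where
  "rho_out U \<rho>0 \<theta> = U \<theta> ** \<rho>0 ** adj (U \<theta>)"

definition is_SLD :: "(real^'p \<Rightarrow> complex^'n^'n) \<Rightarrow> real^'p \<Rightarrow> 'p \<Rightarrow> complex^'n^'n \<Rightarrow> bool" where
  "is_SLD \<rho> \<theta> j L \<longleftrightarrow> hermitian_mat L \<and>
     pdiff \<rho> \<theta> j = (1/2::real) *\<^sub>R (\<rho> \<theta> ** L + L ** \<rho> \<theta>)"

definition SLD :: "(real^'p \<Rightarrow> complex^'n^'n) \<Rightarrow> real^'p \<Rightarrow> 'p \<Rightarrow> complex^'n^'n" where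
  "SLD \<rho> \<theta> j = (SOME L. is_SLD \<rho> \<theta> j L)"

definition SLD_QFI :: "(real^'p \<Rightarrow> complex^'n^'n) \<Rightarrow> real^'p \<Rightarrow> real^'p^'p" where
  "SLD_QFI \<rho> \<theta> = (\<chi> j k. Re (trace (SLD \<rho> \<theta> j ** \<rho> \<theta> ** SLD \<rho> \<theta> k)))"

text \<open>C_Upsilon(theta) for Kraus operators Upsilon_0,...,Upsilon_(r-1) (0-based indexing).\<close>
definition C_Kraus :: "nat \<Rightarrow> (nat \<Rightarrow> real^'p \<Rightarrow> complex^'n^'n) \<Rightarrow> complex^'n^'n \<Rightarrow> real^'p \<Rightarrow> real^'p^'p" where
  "C_Kraus r K \<rho>0 \<theta> = (\<chi> j k. 4 * (\<Sum>l<r. Re (trace (pdiff (K l) \<theta> j ** \<rho>0 ** adj (pdiff (K l) \<theta> k)))))"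

definition unitary_kraus :: "(real^'p \<Rightarrow> complex^'n^'n) \<Rightarrow> nat \<Rightarrow> real^'p \<Rightarrow> complex^'n^'n" where
  "unitary_kraus U l = (if l = 0 then U else (\<lambda>_. 0))"

end

theory Submission
  imports Defs
begin

text \<open>Write \<open>\<rho>\<^sub>0 = |\<psi>\<rangle>\<langle>\<psi>|\<close>, \<open>\<phi> = U\<^sub>\<theta>\<psi>\<close> and \<open>a\<^sub>l = \<partial>\<^sub>lU\<^sub>\<theta>\<psi>\<close>. Then
  \<open>\<rho>\<^sub>\<theta> = |\<phi>\<rangle>\<langle>\<phi>|\<close> and \<open>\<partial>\<^sub>l\<rho>\<^sub>\<theta> = |\<phi>\<rangle>\<langle>a\<^sub>l| + |a\<^sub>l\<rangle>\<langle>\<phi>|\<close>, and differentiating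
  \<open>U\<^sup>\<dagger>U = 1\<close> shows that \<open>c\<^sub>l = \<langle>\<phi>, a\<^sub>l\<rangle>\<close> is purely imaginary. For a pure state the SLD
  equation determines \<open>\<lambda>\<^sup>l\<phi> = 2a\<^sub>l - 2c\<^sub>l\<phi>\<close>, whence
  \<open>H\<^sub>j\<^sub>k = 4 Re \<langle>a\<^sub>k, a\<^sub>j\<rangle> + 4 Re (c\<^sub>j c\<^sub>k)\<close>, while \<open>C\<^sub>j\<^sub>k = 4 Re \<langle>a\<^sub>k, a\<^sub>j\<rangle>\<close>.
  As the \<open>c\<^sub>l\<close> are imaginary, \<open>Re (c\<^sub>j c\<^sub>k) = 0\<close> for all \<open>j, k\<close> iff all \<open>c\<^sub>l\<close> vanish,
  and \<open>tr{U\<^sub>\<theta>\<rho>\<^sub>0(\<partial>\<^sub>lU\<^sub>\<theta>)\<^sup>\<dagger>} = \<langle>a\<^sub>l, \<phi>\<rangle> = -c\<^sub>l\<close>.\<close>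

lemma matrix_mul_scaleR_left:
  "((c::real) *\<^sub>R (A::'a::real_algebra_1^'n^'m)) ** B = c *\<^sub>R (A ** B)"
  by (simp add: vec_eq_iff matrix_matrix_mult_def scaleR_sum_right)

lemma matrix_mul_scaleR_right:
  "(A::'a::real_algebra_1^'n^'m) ** ((c::real) *\<^sub>R B) = c *\<^sub>R (A ** B)"
  by (simp add: vec_eq_iff matrix_matrix_mult_def scaleR_sum_right)

lemma matrix_add_rdistrib: "((A::'a::semiring_1^'n^'m) + B) ** C = A ** C + B ** C"
  by (simp add: vec_eq_iff matrix_matrix_mult_def sum.distrib distrib_right)

lemma matrix_vector_mult_scaleR_left:
  "((c::real) *\<^sub>R (M::'a::real_algebra_1^'n^'m)) *v x = c *\<^sub>R (M *v x)"
  by (simp add: vec_eq_iff matrix_vector_mult_def scaleR_sum_right)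

lemma bounded_bilinear_matrix_mul:
  "bounded_bilinear ((**) :: complex^'n^'m \<Rightarrow> complex^'k^'n \<Rightarrow> complex^'k^'m)"
proof -
  have "bilinear ((**) :: complex^'n^'m \<Rightarrow> complex^'k^'n \<Rightarrow> complex^'k^'m)"
    unfolding bilinear_def
    by (auto intro!: linearI simp: matrix_add_ldistrib matrix_add_rdistrib
        matrix_mul_scaleR_left matrix_mul_scaleR_right)
  then show ?thesis by (simp add: bilinear_conv_bounded_bilinear)
qed

lemma adj_add: "adj (A + B) = adj A + adj B"
  by (simp add: adj_def vec_eq_iff)

lemma adj_scaleR: "adj ((c::real) *\<^sub>R A) = c *\<^sub>R adj A"
  by (simp add: adj_def vec_eq_iff complex_eq_iff)

lemma adj_adj [simp]: "adj (adj A) = A"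
  by (simp add: adj_def vec_eq_iff)

lemma bounded_linear_adj: "bounded_linear (adj :: complex^'n^'n \<Rightarrow> complex^'n^'n)"
proof -
  have "linear (adj :: complex^'n^'n \<Rightarrow> complex^'n^'n)"
    by (auto intro!: linearI simp: adj_add adj_scaleR)
  then show ?thesis by (simp add: linear_conv_bounded_linear)
qed

definition cinner :: "complex^'n \<Rightarrow> complex^'n \<Rightarrow> complex" where
  "cinner x y = (\<Sum>i\<in>UNIV. cnj (x$i) * y$i)"

definition outer :: "complex^'n \<Rightarrow> complex^'n \<Rightarrow> complex^'n^'n" where
  "outer u v = (\<chi> i j. u$i * cnj (v$j))"

lemma matrix_mul_outer: "X ** outer u v = outer (X *v u) v"
  by (simp add: vec_eq_iff matrix_matrix_mult_def matrix_vector_mult_def outer_def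
      sum_distrib_right mult.assoc)

lemma outer_matrix_mul: "outer u v ** Y = outer u (adj Y *v v)"
  by (simp add: vec_eq_iff matrix_matrix_mult_def matrix_vector_mult_def outer_def adj_def
      sum_distrib_left) (intro allI sum.cong, simp_all add: mult_ac)

lemma outer_mult_vec: "outer u v *v w = cinner v w *s u"
  by (simp add: vec_eq_iff matrix_vector_mult_def outer_def cinner_def sum_distrib_left mult_ac)

lemma adj_outer: "adj (outer u v) = outer v u"
  by (simp add: adj_def outer_def vec_eq_iff)

lemma trace_outer: "trace (outer u v) = cinner v u"
  by (simp add: trace_def outer_def cinner_def mult.commute)

lemma cinner_adj: "cinner x (M *v y) = cinner (adj M *v x) y"
  by (simp add: cinner_def matrix_vector_mult_def adj_def sum_distrib_left sum_distrib_right
      mult_ac) (rule sum.swap)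

lemma cnj_cinner: "cnj (cinner x y) = cinner y x"
  by (simp add: cinner_def mult.commute)

lemma cinner_self: "cinner x x = of_real (norm x ^ 2)"
proof -
  have "norm x ^ 2 = (\<Sum>i\<in>UNIV. (norm (x$i))^2)"
    by (simp add: norm_vec_def L2_set_def sum_nonneg)
  then show ?thesis
    by (simp add: cinner_def of_real_sum complex_norm_square[symmetric] mult.commute)
qed

lemma cinner_add_left: "cinner (x + y) z = cinner x z + cinner y z"
  by (simp add: cinner_def distrib_right sum.distrib)

lemma cinner_add_right: "cinner x (y + z) = cinner x y + cinner x z"
  by (simp add: cinner_def distrib_left sum.distrib)

lemma cinner_diff_left: "cinner (x - y) z = cinner x z - cinner y z"
  by (simp add: cinner_def left_diff_distrib sum_subtractf)

lemma cinner_diff_right: "cinner x (y - z) = cinner x y - cinner x z"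
  by (simp add: cinner_def right_diff_distrib sum_subtractf)

lemma cinner_scalar_left: "cinner (c *s x) y = cnj c * cinner x y"
  by (simp add: cinner_def sum_distrib_left mult_ac)

lemma cinner_scalar_right: "cinner x (c *s y) = c * cinner x y"
  by (simp add: cinner_def sum_distrib_left mult_ac)

lemmas cinner_simps = cinner_add_left cinner_add_right cinner_diff_left cinner_diff_right
  cinner_scalar_left cinner_scalar_right

lemma pdiff_eq:
  assumes "(f has_derivative f') (at x)"
  shows "pdiff f x l = f' (axis l 1)"
  using frechet_derivative_at[OF assms] by (simp add: pdiff_def)

lemma pdiff_const [simp]: "pdiff (\<lambda>_. c) x l = 0"
  by (metis pdiff_eq has_derivative_const)

lemma has_derivative_adj:
  "(U has_derivative U') F \<Longrightarrow> ((\<lambda>x. adj (U x)) has_derivative (\<lambda>h. adj (U' h))) F"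
  by (rule bounded_linear.has_derivative[OF bounded_linear_adj])

lemma pdiff_rho_out:
  assumes "U differentiable (at \<theta>)"
  shows "pdiff (rho_out U \<rho>0) \<theta> l
           = pdiff U \<theta> l ** \<rho>0 ** adj (U \<theta>) + U \<theta> ** \<rho>0 ** adj (pdiff U \<theta> l)"
proof -
  define U' where "U' = frechet_derivative U (at \<theta>)"
  have dU: "(U has_derivative U') (at \<theta>)"
    unfolding U'_def using assms frechet_derivative_works by blast
  have "((\<lambda>x. U x ** \<rho>0 ** adj (U x)) has_derivative
      (\<lambda>h. U \<theta> ** \<rho>0 ** adj (U' h) + (U \<theta> ** 0 + U' h ** \<rho>0) ** adj (U \<theta>))) (at \<theta>)"
    by (intro bounded_bilinear.FDERIV[OF bounded_bilinear_matrix_mul] has_derivative_adj dU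
        has_derivative_const)
  then have "(rho_out U \<rho>0 has_derivative
      (\<lambda>h. U \<theta> ** \<rho>0 ** adj (U' h) + U' h ** \<rho>0 ** adj (U \<theta>))) (at \<theta>)"
    by (simp add: rho_out_def[abs_def] matrix_mul_assoc)
  then show ?thesis
    by (simp add: pdiff_eq pdiff_eq[OF dU] add.commute)
qed

text \<open>Differentiating \<open>U\<^sup>\<dagger>U = 1\<close>, which holds on a neighbourhood of \<open>\<theta>\<close>.\<close>
lemma unitary_family_pdiff_skew:
  fixes U :: "real^'p \<Rightarrow> complex^'n^'n"
  assumes "open \<Theta>" and "\<theta> \<in> \<Theta>" and "\<forall>\<theta>\<in>\<Theta>. unitary_mat (U \<theta>)"
    and "U differentiable (at \<theta>)"
  shows "adj (U \<theta>) ** pdiff U \<theta> l + adj (pdiff U \<theta> l) ** U \<theta> = 0"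
proof -
  define U' where "U' = frechet_derivative U (at \<theta>)"
  have dU: "(U has_derivative U') (at \<theta>)"
    unfolding U'_def using assms(4) frechet_derivative_works by blast
  have "((\<lambda>x. adj (U x) ** U x) has_derivative
      (\<lambda>h. adj (U \<theta>) ** U' h + adj (U' h) ** U \<theta>)) (at \<theta>)"
    by (rule bounded_bilinear.FDERIV[OF bounded_bilinear_matrix_mul has_derivative_adj[OF dU] dU])
  then have "((\<lambda>x. mat 1 :: complex^'n^'n) has_derivative
      (\<lambda>h. adj (U \<theta>) ** U' h + adj (U' h) ** U \<theta>)) (at \<theta>)"
    by (rule has_derivative_transform_within_open[OF _ assms(1,2)])
      (use assms(3) in \<open>auto simp: unitary_mat_def\<close>)
  then have "(\<lambda>h. adj (U \<theta>) ** U' h + adj (U' h) ** U \<theta>) = (\<lambda>h. 0)"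
    by (rule has_derivative_unique[OF _ has_derivative_const])
  then show ?thesis by (simp add: pdiff_eq[OF dU] fun_eq_iff)
qed

lemma pure_state_outer:
  assumes "pure_state \<rho>"
  obtains \<psi> where "norm \<psi> = 1" and "\<rho> = outer \<psi> \<psi>"
  using assms unfolding pure_state_def outer_def by blast

lemma cinner_unitary:
  assumes "adj A ** A = mat 1"
  shows "cinner (A *v \<psi>) (A *v \<psi>) = cinner \<psi> \<psi>"
  using cinner_adj[of "A *v \<psi>" A \<psi>] assms by (simp add: matrix_vector_mul_assoc)

lemma cinner_skew_imaginary:
  assumes "adj A ** B + adj B ** A = 0"
  shows "cnj (cinner (A *v \<psi>) (B *v \<psi>)) = - cinner (A *v \<psi>) (B *v \<psi>)"
proof -
  have "cinner (A *v \<psi>) (B *v \<psi>) + cnj (cinner (A *v \<psi>) (B *v \<psi>))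
      = cinner \<psi> ((adj A ** B + adj B ** A) *v \<psi>)"
    using cinner_adj[of \<psi> "adj A" "B *v \<psi>"] cinner_adj[of \<psi> "adj B" "A *v \<psi>"]
    by (simp add: cnj_cinner cinner_add_right matrix_vector_mult_add_rdistrib
        matrix_vector_mul_assoc)
  also have "\<dots> = 0" by (simp add: assms cinner_def)
  finally show ?thesis by (simp add: eq_neg_iff_add_eq_0 add.commute)
qed

lemma rho_out_outer: "rho_out U (outer \<psi> \<psi>) \<theta> = outer (U \<theta> *v \<psi>) (U \<theta> *v \<psi>)"
  by (simp add: rho_out_def matrix_mul_outer outer_matrix_mul)

lemma pdiff_rho_out_outer:
  assumes "U differentiable (at \<theta>)"
  shows "pdiff (rho_out U (outer \<psi> \<psi>)) \<theta> l
           = outer (U \<theta> *v \<psi>) (pdiff U \<theta> l *v \<psi>) + outer (pdiff U \<theta> l *v \<psi>) (U \<theta> *v \<psi>)"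
  by (simp add: pdiff_rho_out[OF assms] matrix_mul_outer outer_matrix_mul add.commute)

lemma trace_sandwich_outer: "trace (A ** outer \<psi> \<psi> ** adj B) = cinner (B *v \<psi>) (A *v \<psi>)"
  by (simp add: matrix_mul_outer outer_matrix_mul trace_outer)

lemma outer_sym_mult_vec:
  assumes "cinner \<phi> \<phi> = 1" and "cnj (cinner \<phi> a) = - cinner \<phi> a"
  shows "(outer \<phi> a + outer a \<phi>) *v \<phi> = a - cinner \<phi> a *s \<phi>"
proof -
  have "cinner a \<phi> = - cinner \<phi> a"
    using assms(2) cnj_cinner[of \<phi> a] by simp
  with assms(1) show ?thesis
    by (simp add: matrix_vector_mult_add_rdistrib outer_mult_vec vec_eq_iff)
qed

text \<open>For a pure state \<open>P\<close> the derivative \<open>D\<close> satisfies \<open>D = PD + DP\<close>, so \<open>2D\<close> solves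
  the SLD equation and the choice in \<open>SLD\<close> is never made from an empty set.\<close>
lemma is_SLD_pure:
  assumes "cinner \<phi> \<phi> = 1" and "\<rho> \<theta> = outer \<phi> \<phi>"
    and "pdiff \<rho> \<theta> j = outer \<phi> a + outer a \<phi>"
    and "cnj (cinner \<phi> a) = - cinner \<phi> a"
  shows "is_SLD \<rho> \<theta> j (2 *\<^sub>R (outer \<phi> a + outer a \<phi>))"
proof -
  define D where "D = outer \<phi> a + outer a \<phi>"
  have D_phi: "D *v \<phi> = a - cinner \<phi> a *s \<phi>"
    unfolding D_def using assms(1,4) by (rule outer_sym_mult_vec)
  have "adj D = D"
    by (simp add: D_def adj_add adj_outer add.commute)
  then have "outer \<phi> \<phi> ** D + D ** outer \<phi> \<phi> = outer \<phi> (D *v \<phi>) + outer (D *v \<phi>) \<phi>"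
    by (simp add: outer_matrix_mul matrix_mul_outer)
  also have "\<dots> = D"
    unfolding D_phi using assms(4) by (simp add: D_def outer_def vec_eq_iff algebra_simps)
  finally have "outer \<phi> \<phi> ** D + D ** outer \<phi> \<phi> = D" .
  with \<open>adj D = D\<close> show ?thesis
    unfolding is_SLD_def hermitian_mat_def assms(2,3) D_def[symmetric]
    by (simp add: adj_scaleR matrix_mul_scaleR_left matrix_mul_scaleR_right
        flip: scaleR_add_right)
qed

lemma is_SLD_pure_mult_vec:
  assumes "cinner \<phi> \<phi> = 1" and "\<rho> \<theta> = outer \<phi> \<phi>"
    and "pdiff \<rho> \<theta> j = outer \<phi> a + outer a \<phi>"
    and "cnj (cinner \<phi> a) = - cinner \<phi> a"
    and "is_SLD \<rho> \<theta> j L"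
  shows "L *v \<phi> = 2 *s a - (2 * cinner \<phi> a) *s \<phi>"
proof -
  define v where "v = L *v \<phi>"
  define t where "t = cinner \<phi> v"
  have "a - cinner \<phi> a *s \<phi> = (outer \<phi> a + outer a \<phi>) *v \<phi>"
    using outer_sym_mult_vec[OF assms(1,4)] by simp
  also have "\<dots> = (1/2::real) *\<^sub>R ((outer \<phi> \<phi> ** L + L ** outer \<phi> \<phi>) *v \<phi>)"
    using assms(2,3,5) by (simp add: is_SLD_def matrix_vector_mult_scaleR_left)
  also have "\<dots> = (1/2::real) *\<^sub>R (t *s \<phi> + v)"
    using assms(1) by (simp add: matrix_vector_mult_add_rdistrib outer_mult_vec v_def t_def
        flip: matrix_vector_mul_assoc)
  finally have "\<forall>i. 2 * (a $ i - cinner \<phi> a * \<phi> $ i) = t * \<phi> $ i + v $ i"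
    by (simp add: vec_eq_iff scaleR_conv_of_real[where 'a=complex] field_simps)
  then have v: "v = 2 *s a - (2 * cinner \<phi> a + t) *s \<phi>"
    by (simp add: vec_eq_iff algebra_simps)
  have "t = cinner \<phi> (2 *s a - (2 * cinner \<phi> a + t) *s \<phi>)"
    by (subst v[symmetric]) (simp add: t_def)
  also have "\<dots> = 2 * cinner \<phi> a - (2 * cinner \<phi> a + t)"
    using assms(1) by (simp add: cinner_simps)
  finally have "t = 0" by simp
  with v show ?thesis by (simp add: v_def)
qed

lemma SLD_QFI_pure:
  assumes "cinner \<phi> \<phi> = 1" and "\<rho> \<theta> = outer \<phi> \<phi>"
    and "\<And>l. pdiff \<rho> \<theta> l = outer \<phi> (a l) + outer (a l) \<phi>"
    and "\<And>l. cnj (cinner \<phi> (a l)) = - cinner \<phi> (a l)"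
  shows "SLD_QFI \<rho> \<theta> $ j $ k
           = 4 * Re (cinner (a k) (a j)) + 4 * Re (cinner \<phi> (a j) * cinner \<phi> (a k))"
proof -
  have SLD: "is_SLD \<rho> \<theta> l (SLD \<rho> \<theta> l)" for l
    unfolding SLD_def by (rule someI, rule is_SLD_pure[OF assms(1,2,3,4)])
  have SLD_phi: "SLD \<rho> \<theta> l *v \<phi> = 2 *s a l - (2 * cinner \<phi> (a l)) *s \<phi>" for l
    by (rule is_SLD_pure_mult_vec[OF assms(1,2,3,4) SLD])
  have a_phi: "cinner (a l) \<phi> = - cinner \<phi> (a l)" for l
    using assms(4) cnj_cinner[of \<phi> "a l"] by simp
  have "trace (SLD \<rho> \<theta> j ** \<rho> \<theta> ** SLD \<rho> \<theta> k)
      = cinner (SLD \<rho> \<theta> k *v \<phi>) (SLD \<rho> \<theta> j *v \<phi>)"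
    using SLD[of k] by (simp add: assms(2) matrix_mul_outer outer_matrix_mul trace_outer
        is_SLD_def hermitian_mat_def)
  also have "\<dots> = 4 * cinner (a k) (a j) + 4 * (cinner \<phi> (a j) * cinner \<phi> (a k))"
    unfolding SLD_phi using assms(1,4) by (simp add: cinner_simps a_phi algebra_simps)
  finally show ?thesis by (simp add: SLD_QFI_def)
qed

lemma C_Kraus_unitary_kraus:
  assumes "r \<ge> 1"
  shows "C_Kraus r (unitary_kraus U) \<rho>0 \<theta> $ j $ k
           = 4 * Re (trace (pdiff U \<theta> j ** \<rho>0 ** adj (pdiff U \<theta> k)))"
proof -
  have "{..<r} = insert 0 {1..<r}" using assms by auto
  moreover have "adj 0 = 0" by (simp add: adj_def vec_eq_iff)
  ultimately show ?thesis
    by (simp add: C_Kraus_def unitary_kraus_def trace_def matrix_matrix_mult_def)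
qed

lemma Re_products_eq_0_iff:
  assumes "\<And>l. Re (c l) = 0"
  shows "(\<forall>j k. Re (c j * c k) = 0) \<longleftrightarrow> (\<forall>l. c l = 0)"
proof (intro iffI allI)
  fix l
  assume "\<forall>j k. Re (c j * c k) = 0"
  then have "Re (c l * c l) = 0" by blast
  then have "Im (c l) * Im (c l) = 0" using assms[of l] by simp
  then show "c l = 0" using assms[of l] by (simp add: complex_eq_iff)
qed simp

theorem lemma2p11:
  fixes \<Theta> :: "(real^'p) set"
    and U :: "real^'p \<Rightarrow> complex^'D^'D"
    and \<rho>0 :: "complex^'D^'D"
    and r :: nat
    and \<theta> :: "real^'p"
  assumes "open \<Theta>"
    and "\<forall>\<theta>\<in>\<Theta>. U differentiable (at \<theta>)"
    and "\<forall>\<theta>\<in>\<Theta>. unitary_mat (U \<theta>)"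
    and "pure_state \<rho>0"
    and "r \<ge> 1"
    and "\<theta> \<in> \<Theta>"
  shows "SLD_QFI (rho_out U \<rho>0) \<theta> = C_Kraus r (unitary_kraus U) \<rho>0 \<theta>
     \<longleftrightarrow> (\<forall>l. trace (U \<theta> ** \<rho>0 ** adj (pdiff U \<theta> l)) = 0)"
proof -
  obtain \<psi> where "norm \<psi> = 1" and \<rho>0: "\<rho>0 = outer \<psi> \<psi>"
    using pure_state_outer[OF assms(4)] .
  define \<phi> where "\<phi> = U \<theta> *v \<psi>"
  define a where "a l = pdiff U \<theta> l *v \<psi>" for l
  define c where "c l = cinner \<phi> (a l)" for l
  have dU: "U differentiable (at \<theta>)" using assms(2,6) by blast
  have unitary: "adj (U \<theta>) ** U \<theta> = mat 1"
    using assms(3,6) by (simp add: unitary_mat_def)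
  have phi_unit: "cinner \<phi> \<phi> = 1"
    using cinner_unitary[OF unitary] \<open>norm \<psi> = 1\<close> by (simp add: \<phi>_def cinner_self)
  have c_imaginary: "cnj (c l) = - c l" for l
    unfolding c_def \<phi>_def a_def
    by (rule cinner_skew_imaginary, rule unitary_family_pdiff_skew[OF assms(1,6,3) dU])
  have rho: "rho_out U \<rho>0 \<theta> = outer \<phi> \<phi>"
    unfolding \<rho>0 \<phi>_def by (rule rho_out_outer)
  have drho: "pdiff (rho_out U \<rho>0) \<theta> l = outer \<phi> (a l) + outer (a l) \<phi>" for l
    unfolding \<rho>0 \<phi>_def a_def by (rule pdiff_rho_out_outer[OF dU])
  have H: "SLD_QFI (rho_out U \<rho>0) \<theta> $ j $ k
      = 4 * Re (cinner (a k) (a j)) + 4 * Re (c j * c k)" for j k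
    unfolding c_def using SLD_QFI_pure[OF phi_unit rho drho c_imaginary[unfolded c_def]] .
  have C: "C_Kraus r (unitary_kraus U) \<rho>0 \<theta> $ j $ k = 4 * Re (cinner (a k) (a j))" for j k
    by (simp add: C_Kraus_unitary_kraus[OF assms(5)] \<rho>0 a_def trace_sandwich_outer)
  have trace_eq: "trace (U \<theta> ** \<rho>0 ** adj (pdiff U \<theta> l)) = cnj (c l)" for l
    by (simp add: \<rho>0 \<phi>_def a_def c_def trace_sandwich_outer cnj_cinner)
  have "Re (c l) = 0" for l
    using c_imaginary[of l] by (simp add: complex_eq_iff)
  then show ?thesis
    using Re_products_eq_0_iff[of c] by (simp add: vec_eq_iff H C trace_eq)
qed

end
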